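(* Let $(f_n)_{n\in\mathbb N}$ be a sequence of contractions (i.e. $\mathrm{Lip}(f_n,d)<1$) on a complete metric space $(\mathbb X,d)$ converging uniformly to some function $f:\mathbb X\to\mathbb X$, i.e. $\sup_{x\in\mathbb X}d(f_n(x),f(x))\to0$. Then the set $\{x_n:n\in\mathbb N\}$, where $x_n$ is the fixed point of $f_n$, is bounded.
   Context: $\mathrm{Lip}(f,d)=\sup_{x\ne y}d(f(x),f(y))/d(x,y)$. *)

theory Defs
  imports "HOL-Analysis.Analysis"
begin

text \<open>Lipschitz constant Lip(f,d) = sup over x \<noteq> y of d(f x, f y)/d(x,y),
  taken in the extended reals (so it may be +\<infinity>; it is -\<infinity> if the space has one point).\<close>
definition Lip :: "('a::metric_space \<Rightarrow> 'b::metric_space) \<Rightarrow> ereal" where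
  "Lip f = (SUP p \<in> {(x, y). x \<noteq> y}. ereal (dist (f (fst p)) (f (snd p)) / dist (fst p) (snd p)))"

end

theory Submission
  imports Defs
begin

text \<open>Eventually all the maps \<open>f n\<close> lie within uniform distance \<open>1/2\<close> of \<open>g\<close>, hence within
  uniform distance \<open>1\<close> of a single contraction \<open>f N\<close>. A fixed point of a map that is uniformly
  \<open>\<epsilon>\<close>-close to a contraction with constant \<open>L\<close> lies within \<open>\<epsilon>/(1-L)\<close> of the fixed point of the
  contraction, so all but finitely many \<open>x n\<close> lie in one ball.\<close>

lemma Lip_ge_dist_quotient:
  fixes h :: "'a::metric_space \<Rightarrow> 'b::metric_space"
  assumes "u \<noteq> v"
  shows "ereal (dist (h u) (h v) / dist u v) \<le> Lip h"
proof -
  have "(u, v) \<in> {(x, y). x \<noteq> y}" using assms by simp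
  from SUP_upper[OF this, of "\<lambda>p. ereal (dist (h (fst p)) (h (snd p)) / dist (fst p) (snd p))"]
  show ?thesis by (simp add: Lip_def)
qed

lemma Lip_less_one_imp_contraction:
  fixes h :: "'a::metric_space \<Rightarrow> 'b::metric_space"
  assumes "Lip h < 1"
  obtains L where "0 \<le> L" "L < 1" "\<And>u v. dist (h u) (h v) \<le> L * dist u v"
proof
  define L where "L = max 0 (real_of_ereal (Lip h))"
  show "0 \<le> L" by (simp add: L_def)
  show "L < 1"
    using assms by (cases "Lip h") (auto simp: L_def)
  show "dist (h u) (h v) \<le> L * dist u v" for u v
  proof (cases "u = v")
    case False
    have quotient_le: "ereal (dist (h u) (h v) / dist u v) \<le> Lip h"
      using Lip_ge_dist_quotient[OF False] .
    then obtain r where "Lip h = ereal r"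
      using assms by (cases "Lip h") auto
    with quotient_le have "dist (h u) (h v) / dist u v \<le> L"
      by (simp add: L_def)
    moreover have "dist u v > 0" using False by simp
    ultimately show ?thesis by (simp add: divide_le_eq mult.commute)
  qed simp
qed

lemma contraction_fixed_point_dist_le:
  fixes h k :: "'a::metric_space \<Rightarrow> 'a"
  assumes "L < 1" "\<And>u v. dist (h u) (h v) \<le> L * dist u v"
    and "h a = a" "k b = b" "dist (h b) (k b) \<le> e"
  shows "dist a b \<le> e / (1 - L)"
proof -
  have "dist a b = dist (h a) (k b)" using assms(3,4) by simp
  also have "\<dots> \<le> dist (h a) (h b) + dist (h b) (k b)" by (rule dist_triangle)
  also have "\<dots> \<le> L * dist a b + e" using assms(2)[of a b] assms(5) by linarith
  finally have "(1 - L) * dist a b \<le> e" by (simp add: algebra_simps)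
  then show ?thesis using assms(1) by (simp add: le_divide_eq mult.commute)
qed

lemma bounded_range_if_eventually_in_bounded:
  assumes "\<forall>\<^sub>F n in sequentially. x n \<in> S" "bounded S"
  shows "bounded (range x)"
proof -
  obtain N where "\<And>n. n \<ge> N \<Longrightarrow> x n \<in> S"
    using assms(1) unfolding eventually_sequentially by blast
  then have "range x \<subseteq> x ` {..<N} \<union> S"
  proof (intro subsetI)
    fix z assume "(\<And>n. N \<le> n \<Longrightarrow> x n \<in> S)" "z \<in> range x"
    then show "z \<in> x ` {..<N} \<union> S"
      by (cases "\<exists>n<N. z = x n") (auto simp: not_less)
  qed
  moreover have "bounded (x ` {..<N} \<union> S)"
    using assms(2) by (simp add: finite_imp_bounded)
  ultimately show ?thesis using bounded_subset by blast
qed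

theorem mainTheorem5:
  fixes f :: "nat \<Rightarrow> 'a::complete_space \<Rightarrow> 'a"
    and g :: "'a \<Rightarrow> 'a"
    and x :: "nat \<Rightarrow> 'a"
  assumes contr: "\<And>n. Lip (f n) < 1"
    and unif: "uniform_limit UNIV f g sequentially"
    and fixpt: "\<And>n. f n (x n) = x n"
  shows "bounded (range x)"
proof -
  obtain N where N: "\<And>n y. n \<ge> N \<Longrightarrow> dist (f n y) (g y) < 1/2"
    using unif unfolding uniform_limit_iff eventually_sequentially
    by (metis UNIV_I divide_pos_pos zero_less_numeral zero_less_one)
  obtain L where L: "L < 1" "\<And>u v. dist (f N u) (f N v) \<le> L * dist u v"
    using Lip_less_one_imp_contraction[OF contr] by metis
  have "x m \<in> cball (x N) (1 / (1 - L))" if "m \<ge> N" for m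
  proof -
    have "dist (f N (x m)) (f m (x m)) \<le> 1"
      using dist_triangle2[of "f N (x m)" "f m (x m)" "g (x m)"] N[of N "x m"] N[OF that, of "x m"]
      by simp
    then show ?thesis
      using contraction_fixed_point_dist_le[where h="f N" and k="f m", OF L fixpt fixpt] by simp
  qed
  then show ?thesis
    by (intro bounded_range_if_eventually_in_bounded[of _ "cball (x N) (1 / (1 - L))"])
      (auto simp: eventually_sequentially)
qed

end
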